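(* Let $\Pi$ be an $m$-round protocol, let $\delta\in(0,\frac12]$ and let $\xi\in(0,1)$. If $\xi\le\frac{\delta^2}{16m^2}$, then there exists $j\in\{0,1,\ldots,\lceil m/\sqrt\xi\rceil\}$ such that $\mathrm{border}_\Pi(\delta',\xi)\le m\sqrt\xi$ for $\delta'=\delta/2+2j\xi\in[\frac\delta2,\delta]$.
   Context: An $m$-round single-bit-message protocol is identified with the complete binary tree of height $m$, with leaf distribution $L_\Pi$; for a node $u$, $\mathrm{val}(\Pi_u)$ is the expected common output conditioned on the transcript starting with $u$. For $\delta,\xi$: $\mathrm{Border}^{\delta,\xi}_\Pi=\{u\text{ non-leaf}:\mathrm{val}(\Pi_u)\in(\delta-\xi,\delta+\xi]\text{ or }\mathrm{val}(\Pi_u)\in[1-\delta-\xi,1-\delta+\xi)\}$ and $\mathrm{border}_\Pi(\delta,\xi)=\Pr_{\ell\leftarrow L_\Pi}[\ell\in\mathrm{desc}(\mathrm{Border}^{\delta,\xi}_\Pi)]$, where $\mathrm{desc}(\mathcal S)$ is the set of nodes with an ancestor (possibly itself) in $\mathcal S$. *)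

theory Defs
  imports "HOL-Probability.Probability" "HOL-Library.Sublist"
begin

text \<open>An m-round single-bit-message protocol is identified with the complete binary
tree of height m: nodes are bit lists of length at most m, leaves are bit lists of
length exactly m.  The protocol is given by its leaf distribution L (a pmf on the
leaves) and the common output out l :: bool of each leaf (full transcript).\<close>

definition is_protocol :: "nat \<Rightarrow> bool list pmf \<Rightarrow> bool" where
  "is_protocol m L \<longleftrightarrow> (\<forall>l \<in> set_pmf L. length l = m)"

text \<open>val(Pi_u): expected common output conditioned on the transcript starting with u
(set to 0 by Isabelle's division convention if u has probability 0).\<close>
definition val :: "bool list pmf \<Rightarrow> (bool list \<Rightarrow> bool) \<Rightarrow> bool list \<Rightarrow> real" where
  "val L out u =
     measure_pmf.prob L {l. prefix u l \<and> out l} / measure_pmf.prob L {l. prefix u l}"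

definition Border :: "nat \<Rightarrow> bool list pmf \<Rightarrow> (bool list \<Rightarrow> bool) \<Rightarrow> real \<Rightarrow> real \<Rightarrow> bool list set" where
  "Border m L out \<delta> \<xi> =
     {u. length u < m \<and>
         ((\<delta> - \<xi> < val L out u \<and> val L out u \<le> \<delta> + \<xi>) \<or>
          (1 - \<delta> - \<xi> \<le> val L out u \<and> val L out u < 1 - \<delta> + \<xi>))}"

definition desc :: "bool list set \<Rightarrow> bool list set" where
  "desc S = {v. \<exists>u \<in> S. prefix u v}"

definition border :: "nat \<Rightarrow> bool list pmf \<Rightarrow> (bool list \<Rightarrow> bool) \<Rightarrow> real \<Rightarrow> real \<Rightarrow> real" where
  "border m L out \<delta> \<xi> = measure_pmf.prob L (desc (Border m L out \<delta> \<xi>))"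

end

theory Submission
  imports Defs
begin

text \<open>A node lies in at most two of the windows of width \<open>2\<xi>\<close> centred at the grid points
  \<open>\<delta>/2 + 2j\<xi>\<close>: one for its value and one for the complementary value. Hence, summing over all
  leaves and their at most \<open>m\<close> proper prefixes, the borders of the \<open>N + 1\<close> grid points add up to
  at most \<open>2m\<close>; for \<open>N = \<lceil>m/\<surd>\<xi>\<rceil>\<close> and \<open>m \<ge> 2\<close> one of them is therefore at most
  \<open>2m/(N + 1) \<le> m\<surd>\<xi>\<close>. For \<open>m = 1\<close> this averaging is too weak; there the root alone
  carries every nonzero border, so at most two grid points have positive border, while
  \<open>\<xi> \<le> \<delta>\<^sup>2/16\<close> gives at least nine grid points.\<close>

definition in_window :: "real \<Rightarrow> real \<Rightarrow> real \<Rightarrow> bool" where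
  "in_window c \<xi> v \<longleftrightarrow> c - \<xi> < v \<and> v \<le> c + \<xi>"

lemma Border_eq_in_window:
  "Border m L out d \<xi> =
     {u. length u < m \<and> (in_window d \<xi> (val L out u) \<or> in_window d \<xi> (1 - val L out u))}"
  unfolding Border_def in_window_def by auto

lemma in_window_grid_unique:
  fixes a \<xi> v :: real and j j' :: nat
  assumes "0 < \<xi>"
    and "in_window (a + 2 * real j * \<xi>) \<xi> v" "in_window (a + 2 * real j' * \<xi>) \<xi> v"
  shows "j = j'"
proof -
  have "(2 * real j' - 1) * \<xi> < (2 * real j + 1) * \<xi>"
    and "(2 * real j - 1) * \<xi> < (2 * real j' + 1) * \<xi>"
    using assms(2,3) by (auto simp: in_window_def algebra_simps)
  then have "2 * real j' - 1 < 2 * real j + 1" and "2 * real j - 1 < 2 * real j' + 1"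
    using \<open>0 < \<xi>\<close> by (simp_all add: mult_less_cancel_right)
  then show ?thesis by linarith
qed

lemma grid_windows_subset_pair:
  fixes a \<xi> v :: real
  assumes "0 < \<xi>"
  shows "\<exists>j0 j1. {j::nat. in_window (a + 2 * real j * \<xi>) \<xi> v \<or>
                          in_window (a + 2 * real j * \<xi>) \<xi> (1 - v)} \<subseteq> {j0, j1}"
proof -
  have "\<exists>j0. {j::nat. in_window (a + 2 * real j * \<xi>) \<xi> w} \<subseteq> {j0}" for w
    using in_window_grid_unique[OF assms] by blast
  then obtain j0 j1
    where "{j::nat. in_window (a + 2 * real j * \<xi>) \<xi> v} \<subseteq> {j0}"
      and "{j::nat. in_window (a + 2 * real j * \<xi>) \<xi> (1 - v)} \<subseteq> {j1}"
    by meson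
  then show ?thesis by blast
qed

lemma sum_indicator_Border_grid_le_2:
  fixes a \<xi> :: real and J :: "nat set"
  assumes "finite J" "0 < \<xi>"
  shows "(\<Sum>j\<in>J. indicator (Border m L out (a + 2 * real j * \<xi>) \<xi>) u :: real) \<le> 2"
proof -
  define v where "v = val L out u"
  obtain j0 j1 where pair: "{j::nat. in_window (a + 2 * real j * \<xi>) \<xi> v \<or>
                                  in_window (a + 2 * real j * \<xi>) \<xi> (1 - v)} \<subseteq> {j0, j1}"
    using grid_windows_subset_pair[OF assms(2)] by blast
  have "(\<Sum>j\<in>J. indicator (Border m L out (a + 2 * real j * \<xi>) \<xi>) u :: real)
      = real (card {j\<in>J. u \<in> Border m L out (a + 2 * real j * \<xi>) \<xi>})"
    using assms(1) by (simp add: indicator_def sum.If_cases Int_def)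
  also have "card {j\<in>J. u \<in> Border m L out (a + 2 * real j * \<xi>) \<xi>} \<le> card {j0, j1}"
    by (rule card_mono) (use pair in \<open>auto simp: Border_eq_in_window v_def\<close>)
  also have "card {j0, j1} \<le> 2"
    by (simp add: card_insert_if)
  finally show ?thesis by simp
qed

lemma indicator_desc_le_sum_prefixes:
  fixes B :: "bool list set" and l :: "bool list"
  assumes "B \<subseteq> {u. length u < m}"
  shows "(indicator (desc B) l :: real) \<le> (\<Sum>k<m. indicator B (take k l))"
proof (cases "l \<in> desc B")
  case True
  then obtain u where u: "u \<in> B" "prefix u l"
    by (auto simp: desc_def)
  then have "take (length u) l = u" and "length u < m"
    using assms by (auto simp: prefix_def)
  then have "(1::real) = indicator B (take (length u) l)"
    using u(1) by simp
  also have "\<dots> \<le> (\<Sum>k<m. indicator B (take k l))"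
    by (rule member_le_sum) (use \<open>length u < m\<close> in auto)
  finally show ?thesis
    using True by simp
qed (simp add: sum_nonneg)

lemma sum_indicator_desc_Border_grid_le:
  fixes a \<xi> :: real and J :: "nat set"
  assumes "finite J" "0 < \<xi>"
  shows "(\<Sum>j\<in>J. indicator (desc (Border m L out (a + 2 * real j * \<xi>) \<xi>)) l :: real) \<le> 2 * real m"
proof -
  let ?B = "\<lambda>j. Border m L out (a + 2 * real j * \<xi>) \<xi>"
  have "(\<Sum>j\<in>J. indicator (desc (?B j)) l :: real) \<le> (\<Sum>j\<in>J. \<Sum>k<m. indicator (?B j) (take k l))"
    by (intro sum_mono indicator_desc_le_sum_prefixes) (auto simp: Border_def)
  also have "\<dots> = (\<Sum>k<m. \<Sum>j\<in>J. indicator (?B j) (take k l))"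
    by (rule sum.swap)
  also have "\<dots> \<le> (\<Sum>k<m. 2)"
    by (intro sum_mono sum_indicator_Border_grid_le_2 assms)
  finally show ?thesis by simp
qed

lemma sum_measure_pmf_le_pointwise_count:
  fixes L :: "'a pmf" and A :: "'b \<Rightarrow> 'a set" and J :: "'b set" and C :: real
  assumes "finite J" "\<And>l. l \<in> set_pmf L \<Longrightarrow> (\<Sum>j\<in>J. indicator (A j) l) \<le> C"
  shows "(\<Sum>j\<in>J. measure_pmf.prob L (A j)) \<le> C"
proof -
  have integrable: "integrable (measure_pmf L) (indicator S :: 'a \<Rightarrow> real)" for S
    by (rule measure_pmf.integrable_const_bound[where B=1]) (auto simp: indicator_def)
  have "(\<Sum>j\<in>J. measure_pmf.prob L (A j)) = (\<integral>l. (\<Sum>j\<in>J. indicator (A j) l) \<partial>measure_pmf L)"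
    using integrable by (simp add: Bochner_Integration.integral_sum)
  also have "\<dots> \<le> (\<integral>l. C \<partial>measure_pmf L)"
    using integrable assms(2) by (intro integral_mono_AE AE_pmfI) auto
  finally show ?thesis by simp
qed

lemma sum_border_grid_le:
  fixes a \<xi> :: real and J :: "nat set"
  assumes "is_protocol m L" "finite J" "0 < \<xi>"
  shows "(\<Sum>j\<in>J. border m L out (a + 2 * real j * \<xi>) \<xi>) \<le> 2 * real m"
  unfolding border_def
  using assms by (intro sum_measure_pmf_le_pointwise_count sum_indicator_desc_Border_grid_le)
    (auto simp: is_protocol_def)

lemma root_in_window_if_border_pos:
  assumes "0 < border 1 L out d \<xi>"
  shows "in_window d \<xi> (val L out []) \<or> in_window d \<xi> (1 - val L out [])"
proof -
  have "Border 1 L out d \<xi> \<noteq> {}"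
    using assms by (auto simp: border_def desc_def)
  then show ?thesis
    by (auto simp: Border_eq_in_window)
qed

lemma ex_grid_border_1_nonpos:
  fixes a \<xi> :: real and J :: "nat set"
  assumes "0 < \<xi>" "finite J" "2 < card J"
  shows "\<exists>j\<in>J. border 1 L out (a + 2 * real j * \<xi>) \<xi> \<le> 0"
proof -
  obtain j0 j1 where pos: "{j. 0 < border 1 L out (a + 2 * real j * \<xi>) \<xi>} \<subseteq> {j0, j1}"
    using grid_windows_subset_pair[OF assms(1), of a "val L out []"] root_in_window_if_border_pos
    by blast
  have "\<not> J \<subseteq> {j0, j1}"
  proof
    assume "J \<subseteq> {j0, j1}"
    then have "card J \<le> card {j0, j1}"
      by (intro card_mono) auto
    also have "\<dots> \<le> 2"
      by (simp add: card_insert_if)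
    finally show False
      using assms(3) by simp
  qed
  then obtain j where "j \<in> J" "j \<notin> {j0, j1}"
    by blast
  with pos have "\<not> 0 < border 1 L out (a + 2 * real j * \<xi>) \<xi>"
    by blast
  with \<open>j \<in> J\<close> show ?thesis
    by (meson not_less)
qed

lemma ex_le_of_sum_le_card_mult:
  fixes b :: "'a \<Rightarrow> real"
  assumes "finite J" "J \<noteq> {}" "(\<Sum>j\<in>J. b j) \<le> real (card J) * c"
  shows "\<exists>j\<in>J. b j \<le> c"
proof (rule ccontr)
  assume "\<not> ?thesis"
  then have "(\<Sum>j\<in>J. c) < (\<Sum>j\<in>J. b j)"
    using assms(1,2) by (intro sum_strict_mono) auto
  with assms(3) show False
    by simp
qed

lemma ex_grid_border_le_average:
  fixes a \<xi> :: real and J :: "nat set"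
  assumes "is_protocol m L" "finite J" "J \<noteq> {}" "0 < \<xi>"
  shows "\<exists>j\<in>J. border m L out (a + 2 * real j * \<xi>) \<xi> \<le> 2 * real m / real (card J)"
proof (rule ex_le_of_sum_le_card_mult[OF assms(2,3)])
  show "(\<Sum>j\<in>J. border m L out (a + 2 * real j * \<xi>) \<xi>) \<le> real (card J) * (2 * real m / real (card J))"
    using sum_border_grid_le[OF assms(1,2,4)] assms(2,3) by simp
qed

lemma ex_grid_border_le_mult:
  fixes a \<xi> s :: real
  assumes "is_protocol m L" "2 \<le> m" "0 < \<xi>" "real m \<le> real N * s"
  shows "\<exists>j\<le>N. border m L out (a + 2 * real j * \<xi>) \<xi> \<le> real m * s"
proof -
  have "0 \<le> s"
  proof (rule ccontr)
    assume "\<not> 0 \<le> s"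
    then have "real N * s \<le> 0"
      by (simp add: mult_nonneg_nonpos)
    with assms(2,4) show False
      by linarith
  qed
  obtain j where "j \<le> N" and j: "border m L out (a + 2 * real j * \<xi>) \<xi> \<le> 2 * real m / real (N + 1)"
    using ex_grid_border_le_average[OF assms(1) _ _ assms(3), of "{..N}"] by auto
  have "2 * real m \<le> real m * real m"
    using assms(2) by (intro mult_right_mono) simp_all
  also have "\<dots> \<le> real m * (real N * s)"
    using assms(4) by (simp add: mult_left_mono)
  also have "\<dots> \<le> real (N + 1) * (real m * s)"
    using \<open>0 \<le> s\<close> by (simp add: algebra_simps)
  finally have "2 * real m / real (N + 1) \<le> real m * s"
    by (simp add: divide_le_eq mult.commute)
  with j \<open>j \<le> N\<close> show ?thesis
    using order_trans by blast
qed

lemma le_nat_ceiling_divide_mult: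
  fixes x s :: real
  assumes "0 < s"
  shows "x \<le> real (nat \<lceil>x / s\<rceil>) * s"
proof -
  have "x / s \<le> real (nat \<lceil>x / s\<rceil>)"
    by linarith
  with assms show ?thesis
    by (simp add: pos_divide_le_eq)
qed

theorem lemma4p26:
  fixes m :: nat and L :: "bool list pmf" and out :: "bool list \<Rightarrow> bool"
    and \<delta> \<xi> :: real
  assumes "is_protocol m L"
    and "0 < \<delta>" and "\<delta> \<le> 1/2"
    and "0 < \<xi>" and "\<xi> < 1"
    and "\<xi> \<le> \<delta>^2 / (16 * (real m)^2)"
  shows "\<exists>j::nat. j \<le> nat \<lceil>real m / sqrt \<xi>\<rceil> \<and>
           border m L out (\<delta>/2 + 2 * real j * \<xi>) \<xi> \<le> real m * sqrt \<xi>"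
proof -
  define N where "N = nat \<lceil>real m / sqrt \<xi>\<rceil>"
  have "m \<noteq> 0"
    using assms(4,6) by (cases m) auto
  have "0 < sqrt \<xi>"
    using assms(4) by simp
  have sqrt_\<xi>_le: "sqrt \<xi> \<le> \<delta> / (4 * real m)"
    using assms(2,6) by (intro real_le_lsqrt) (simp_all add: power_divide power_mult_distrib)
  have N_ge: "real m \<le> real N * sqrt \<xi>"
    unfolding N_def using \<open>0 < sqrt \<xi>\<close> by (rule le_nat_ceiling_divide_mult)
  consider "m = 1" | "2 \<le> m"
    using \<open>m \<noteq> 0\<close> by linarith
  then have "\<exists>j\<le>N. border m L out (\<delta>/2 + 2 * real j * \<xi>) \<xi> \<le> real m * sqrt \<xi>"
  proof cases
    case 1
    have "8 \<le> real N * (8 * sqrt \<xi>)"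
      using N_ge 1 by simp
    also have "\<dots> \<le> real N"
      using sqrt_\<xi>_le assms(3) 1 by (simp add: mult_left_le)
    finally have "\<exists>j\<in>{..N}. border 1 L out (\<delta>/2 + 2 * real j * \<xi>) \<xi> \<le> 0"
      by (intro ex_grid_border_1_nonpos assms(4)) simp_all
    then obtain j where "j \<le> N" "border 1 L out (\<delta>/2 + 2 * real j * \<xi>) \<xi> \<le> 0"
      by blast
    moreover have "0 \<le> sqrt \<xi>"
      using assms(4) by simp
    ultimately show ?thesis
      using 1 by (metis mult_1 of_nat_1 order_trans)
  next
    case 2
    from assms(1) 2 assms(4) N_ge show ?thesis
      by (rule ex_grid_border_le_mult)
  qed
  then show ?thesis
    unfolding N_def by blast
qed

end
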